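(* Let $\mathbf A$ be a pseudo-Kleene lattice. Then $\mathbf A$ satisfies (SP1) if and only if $\mathbf A$ contains no subalgebra isomorphic to $\mathbf B_6$ and no subalgebra isomorphic to $\mathbf B_8$.
   Context: A pseudo-Kleene lattice is an algebra $(A,\land,\lor,{}',0,1)$ that is a bounded lattice with an antitone involution ${}'$ ($x\leq y\Rightarrow y'\leq x'$, $x''=x$) satisfying $x\land x'\leq y\lor y'$; subalgebras are with respect to $\land,\lor,{}',0,1$. (SP1) is the condition: for all $x,y$, if $x\leq y$ and $x'\land y=(x\land x')\lor(y\land y')$, then $y\land(x\lor x')=x\lor(y\land y')$. $\mathbf B_6$ is the pseudo-Kleene lattice (ortholattice) with elements $0,x,y,y',x',1$, covers $0\prec x\prec y\prec 1$, $0\prec y'\prec x'\prec 1$, involution $u\leftrightarrow u'$, $0\leftrightarrow 1$. $\mathbf B_8$ is the pseudo-Kleene lattice with elements $0,z',x,y,y',x',z,1$, covers $0\prec z'$, $z'\prec x\prec y\prec z$, $z'\prec y'\prec x'\prec z$, $z\prec 1$, involution $u\leftrightarrow u'$, $0\leftrightarrow 1$. *)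

theory Defs
  imports Main
begin

definition pseudo_kleene :: "('a::bounded_lattice \<Rightarrow> 'a) \<Rightarrow> bool" where
  "pseudo_kleene neg \<longleftrightarrow>
     (\<forall>x y. x \<le> y \<longrightarrow> neg y \<le> neg x) \<and>
     (\<forall>x. neg (neg x) = x) \<and>
     (\<forall>x y. inf x (neg x) \<le> sup y (neg y))"

definition SP1 :: "('a::bounded_lattice \<Rightarrow> 'a) \<Rightarrow> bool" where
  "SP1 neg \<longleftrightarrow>
     (\<forall>x y. x \<le> y \<and> inf (neg x) y = sup (inf x (neg x)) (inf y (neg y)) \<longrightarrow>
        inf y (sup x (neg x)) = sup x (inf y (neg y)))"

definition subalgebra :: "('a::bounded_lattice \<Rightarrow> 'a) \<Rightarrow> 'a set \<Rightarrow> bool" where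
  "subalgebra neg S \<longleftrightarrow>
     bot \<in> S \<and> top \<in> S \<and>
     (\<forall>a\<in>S. \<forall>b\<in>S. inf a b \<in> S \<and> sup a b \<in> S) \<and>
     (\<forall>a\<in>S. neg a \<in> S)"

(* The algebra B6: 0 < x < y < 1, 0 < y' < x' < 1 *)
datatype B6 = B6_0 | B6_x | B6_y | B6_y' | B6_x' | B6_1

fun B6_le :: "B6 \<Rightarrow> B6 \<Rightarrow> bool" where
  "B6_le a b \<longleftrightarrow> a = B6_0 \<or> b = B6_1 \<or> a = b \<or>
      (a = B6_x \<and> b = B6_y) \<or> (a = B6_y' \<and> b = B6_x')"

definition B6_meet :: "B6 \<Rightarrow> B6 \<Rightarrow> B6" where
  "B6_meet a b = (if B6_le a b then a else if B6_le b a then b else B6_0)"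

definition B6_join :: "B6 \<Rightarrow> B6 \<Rightarrow> B6" where
  "B6_join a b = (if B6_le a b then b else if B6_le b a then a else B6_1)"

fun B6_neg :: "B6 \<Rightarrow> B6" where
  "B6_neg B6_0 = B6_1" | "B6_neg B6_1 = B6_0"
| "B6_neg B6_x = B6_x'" | "B6_neg B6_x' = B6_x"
| "B6_neg B6_y = B6_y'" | "B6_neg B6_y' = B6_y"

(* The algebra B8: 0 < z' < x < y < z < 1, z' < y' < x' < z *)
datatype B8 = B8_0 | B8_z' | B8_x | B8_y | B8_y' | B8_x' | B8_z | B8_1

fun B8_le :: "B8 \<Rightarrow> B8 \<Rightarrow> bool" where
  "B8_le a b \<longleftrightarrow> a = B8_0 \<or> b = B8_1 \<or> a = b \<or>
      (a = B8_z' \<and> b \<noteq> B8_0) \<or> (b = B8_z \<and> a \<noteq> B8_1) \<or>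
      (a = B8_x \<and> b = B8_y) \<or> (a = B8_y' \<and> b = B8_x')"

definition B8_meet :: "B8 \<Rightarrow> B8 \<Rightarrow> B8" where
  "B8_meet a b = (if B8_le a b then a else if B8_le b a then b else B8_z')"

definition B8_join :: "B8 \<Rightarrow> B8 \<Rightarrow> B8" where
  "B8_join a b = (if B8_le a b then b else if B8_le b a then a else B8_z)"

fun B8_neg :: "B8 \<Rightarrow> B8" where
  "B8_neg B8_0 = B8_1" | "B8_neg B8_1 = B8_0"
| "B8_neg B8_z' = B8_z" | "B8_neg B8_z = B8_z'"
| "B8_neg B8_x = B8_x'" | "B8_neg B8_x' = B8_x"
| "B8_neg B8_y = B8_y'" | "B8_neg B8_y' = B8_y"

definition has_sub_B6 :: "('a::bounded_lattice \<Rightarrow> 'a) \<Rightarrow> bool" where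
  "has_sub_B6 neg \<longleftrightarrow> (\<exists>S (h :: B6 \<Rightarrow> 'a). subalgebra neg S \<and> bij_betw h UNIV S \<and>
     (\<forall>a b. h (B6_meet a b) = inf (h a) (h b)) \<and>
     (\<forall>a b. h (B6_join a b) = sup (h a) (h b)) \<and>
     (\<forall>a. h (B6_neg a) = neg (h a)) \<and>
     h B6_0 = bot \<and> h B6_1 = top)"

definition has_sub_B8 :: "('a::bounded_lattice \<Rightarrow> 'a) \<Rightarrow> bool" where
  "has_sub_B8 neg \<longleftrightarrow> (\<exists>S (h :: B8 \<Rightarrow> 'a). subalgebra neg S \<and> bij_betw h UNIV S \<and>
     (\<forall>a b. h (B8_meet a b) = inf (h a) (h b)) \<and>
     (\<forall>a b. h (B8_join a b) = sup (h a) (h b)) \<and>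
     (\<forall>a. h (B8_neg a) = neg (h a)) \<and>
     h B8_0 = bot \<and> h B8_1 = top)"

end

theory Submission
  imports Defs
begin

text \<open>
  Both \<open>B\<^sub>6\<close> and \<open>B\<^sub>8\<close> violate (SP1) at the pair \<open>x \<le> y\<close>: there the hypothesis
  holds, while the conclusion reads \<open>y = x\<close>. Conversely, if (SP1) fails at \<open>x \<le> y\<close>, put
  \<open>w = x' \<sqinter> y\<close>, \<open>p = x \<squnion> (y \<sqinter> y')\<close> and \<open>q = y \<sqinter> (x \<squnion> x')\<close>. Then \<open>w < p < q < w'\<close>
  and \<open>w < q' < p' < w'\<close>, and every element of \<open>{p, q}\<close> meets every element of
  \<open>{p', q'}\<close> in \<open>w\<close> and joins it to \<open>w'\<close>. Together with \<open>0\<close> and \<open>1\<close> these elements form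
  a copy of \<open>B\<^sub>8\<close> (with \<open>z' = w\<close>), which collapses to \<open>B\<^sub>6\<close> when \<open>w = 0\<close>.
\<close>

locale antitone_involution =
  fixes neg :: "'a::bounded_lattice \<Rightarrow> 'a"
  assumes neg_antimono: "x \<le> y \<Longrightarrow> neg y \<le> neg x"
    and neg_neg [simp]: "neg (neg x) = x"
begin

lemma neg_le_neg_iff [simp]: "neg x \<le> neg y \<longleftrightarrow> y \<le> x"
  by (metis neg_antimono neg_neg)

lemma neg_inject [simp]: "neg x = neg y \<longleftrightarrow> x = y"
  by (metis neg_neg)

lemma le_neg_iff: "x \<le> neg y \<longleftrightarrow> y \<le> neg x"
  by (metis neg_le_neg_iff neg_neg)

lemma neg_less_neg_iff [simp]: "neg x < neg y \<longleftrightarrow> y < x"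
  by (simp add: less_le_not_le)

lemma less_neg_iff: "x < neg y \<longleftrightarrow> y < neg x"
  by (metis neg_less_neg_iff neg_neg)

lemma neg_sup [simp]: "neg (sup x y) = inf (neg x) (neg y)"
proof (rule antisym)
  have "sup x y \<le> neg (inf (neg x) (neg y))"
    by (simp add: le_neg_iff [of x] le_neg_iff [of y])
  then show "inf (neg x) (neg y) \<le> neg (sup x y)"
    by (simp add: le_neg_iff)
qed simp

lemma neg_inf [simp]: "neg (inf x y) = sup (neg x) (neg y)"
  by (metis neg_neg neg_sup)

lemma neg_bot [simp]: "neg bot = top"
  by (metis bot_least neg_le_neg_iff neg_neg top_unique)

lemma neg_top [simp]: "neg top = bot"
  by (metis neg_bot neg_neg)

end

lemma pseudo_kleene_antitone_involution:
  "pseudo_kleene neg \<Longrightarrow> antitone_involution neg"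
  unfolding pseudo_kleene_def by unfold_locales blast+

lemma pseudo_kleene_inf_neg_le_sup_neg:
  "pseudo_kleene neg \<Longrightarrow> inf x (neg x) \<le> sup y (neg y)"
  unfolding pseudo_kleene_def by blast

lemma SP1D:
  "SP1 neg \<Longrightarrow> x \<le> y \<Longrightarrow> inf (neg x) y = sup (inf x (neg x)) (inf y (neg y))
    \<Longrightarrow> inf y (sup x (neg x)) = sup x (inf y (neg y))"
  unfolding SP1_def by blast

lemma subalgebra_range:
  assumes "bot \<in> range h" "top \<in> range h"
    and "\<And>a b. inf (h a) (h b) \<in> range h" "\<And>a b. sup (h a) (h b) \<in> range h"
    and "\<And>a. neg (h a) \<in> range h"
  shows "subalgebra neg (range h)"
  unfolding subalgebra_def using assms by blast

lemma has_sub_B6I: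
  fixes h :: "B6 \<Rightarrow> 'a::bounded_lattice"
  assumes "inj h" "\<And>a b. h (B6_meet a b) = inf (h a) (h b)"
    "\<And>a b. h (B6_join a b) = sup (h a) (h b)" "\<And>a. h (B6_neg a) = neg (h a)"
    "h B6_0 = bot" "h B6_1 = top"
  shows "has_sub_B6 neg"
proof -
  have "subalgebra neg (range h)"
    by (rule subalgebra_range) (metis assms rangeI)+
  then show ?thesis
    unfolding has_sub_B6_def bij_betw_def using assms by blast
qed

lemma has_sub_B8I:
  fixes h :: "B8 \<Rightarrow> 'a::bounded_lattice"
  assumes "inj h" "\<And>a b. h (B8_meet a b) = inf (h a) (h b)"
    "\<And>a b. h (B8_join a b) = sup (h a) (h b)" "\<And>a. h (B8_neg a) = neg (h a)"
    "h B8_0 = bot" "h B8_1 = top"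
  shows "has_sub_B8 neg"
proof -
  have "subalgebra neg (range h)"
    by (rule subalgebra_range) (metis assms rangeI)+
  then show ?thesis
    unfolding has_sub_B8_def bij_betw_def using assms by blast
qed

lemma map_if_le_eq_inf:
  fixes h :: "'b \<Rightarrow> 'a::lattice"
  assumes "le a b \<Longrightarrow> h a \<le> h b" "le b a \<Longrightarrow> h b \<le> h a"
    and "\<not> le a b \<Longrightarrow> \<not> le b a \<Longrightarrow> inf (h a) (h b) = h z"
  shows "h (if le a b then a else if le b a then b else z) = inf (h a) (h b)"
  using assms by (auto simp: inf_absorb1 inf_absorb2)

lemma map_if_le_eq_sup:
  fixes h :: "'b \<Rightarrow> 'a::lattice"
  assumes "le a b \<Longrightarrow> h a \<le> h b" "le b a \<Longrightarrow> h b \<le> h a"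
    and "\<not> le a b \<Longrightarrow> \<not> le b a \<Longrightarrow> sup (h a) (h b) = h z"
  shows "h (if le a b then b else if le b a then a else z) = sup (h a) (h b)"
  using assms by (auto simp: sup_absorb1 sup_absorb2)

lemma not_SP1_if_has_sub_B6:
  assumes "has_sub_B6 neg"
  shows "\<not> SP1 neg"
proof
  assume "SP1 neg"
  from assms obtain h :: "B6 \<Rightarrow> 'a" where "inj h"
    and meet: "\<And>a b. inf (h a) (h b) = h (B6_meet a b)"
    and join: "\<And>a b. sup (h a) (h b) = h (B6_join a b)"
    and neg: "\<And>a. neg (h a) = h (B6_neg a)"
    unfolding has_sub_B6_def bij_betw_def by (metis (no_types))
  have "h B6_x \<le> h B6_y"
    by (simp add: le_iff_inf meet B6_meet_def)
  moreover have "inf (neg (h B6_x)) (h B6_y)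
      = sup (inf (h B6_x) (neg (h B6_x))) (inf (h B6_y) (neg (h B6_y)))"
    by (simp add: neg meet join B6_meet_def B6_join_def)
  ultimately have "inf (h B6_y) (sup (h B6_x) (neg (h B6_x)))
      = sup (h B6_x) (inf (h B6_y) (neg (h B6_y)))"
    by (rule SP1D [OF \<open>SP1 neg\<close>])
  then have "h B6_y = h B6_x"
    by (simp add: neg meet join B6_meet_def B6_join_def)
  with \<open>inj h\<close> show False
    by (simp add: inj_eq)
qed

lemma not_SP1_if_has_sub_B8:
  assumes "has_sub_B8 neg"
  shows "\<not> SP1 neg"
proof
  assume "SP1 neg"
  from assms obtain h :: "B8 \<Rightarrow> 'a" where "inj h"
    and meet: "\<And>a b. inf (h a) (h b) = h (B8_meet a b)"
    and join: "\<And>a b. sup (h a) (h b) = h (B8_join a b)"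
    and neg: "\<And>a. neg (h a) = h (B8_neg a)"
    unfolding has_sub_B8_def bij_betw_def by (metis (no_types))
  have "h B8_x \<le> h B8_y"
    by (simp add: le_iff_inf meet B8_meet_def)
  moreover have "inf (neg (h B8_x)) (h B8_y)
      = sup (inf (h B8_x) (neg (h B8_x))) (inf (h B8_y) (neg (h B8_y)))"
    by (simp add: neg meet join B8_meet_def B8_join_def)
  ultimately have "inf (h B8_y) (sup (h B8_x) (neg (h B8_x)))
      = sup (h B8_x) (inf (h B8_y) (neg (h B8_y)))"
    by (rule SP1D [OF \<open>SP1 neg\<close>])
  then have "h B8_y = h B8_x"
    by (simp add: neg meet join B8_meet_def B8_join_def)
  with \<open>inj h\<close> show False
    by (simp add: inj_eq)
qed

locale B_configuration = antitone_involution +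
  fixes w p q :: "'a::bounded_lattice"
  assumes w_le_p: "w \<le> p" and p_le_q: "p \<le> q" and w_le_neg_q: "w \<le> neg q"
    and inf_q_neg_p: "inf q (neg p) = w" and sup_p_neg_q: "sup p (neg q) = neg w"
    and p_neq_q: "p \<noteq> q"
begin

lemma q_le_neg_w: "q \<le> neg w"
  using w_le_neg_q le_neg_iff by blast

lemma inf_crossing:
  assumes "w \<le> u" "u \<le> q" "w \<le> v" "v \<le> neg p"
  shows "inf u v = w"
proof (rule antisym)
  have "inf u v \<le> inf q (neg p)"
    using assms by (intro inf_mono)
  then show "inf u v \<le> w"
    by (simp add: inf_q_neg_p)
qed (use assms in simp)

lemma sup_crossing:
  assumes "p \<le> u" "u \<le> neg w" "neg q \<le> v" "v \<le> neg w"
  shows "sup u v = neg w"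
proof (rule antisym)
  have "sup p (neg q) \<le> sup u v"
    using assms by (intro sup_mono)
  then show "neg w \<le> sup u v"
    by (simp add: sup_p_neg_q)
qed (use assms in simp)

lemma w_less_p: "w < p"
proof -
  have "w \<noteq> p"
  proof
    assume "w = p"
    then have "inf q (neg p) = q"
      using q_le_neg_w by (simp add: inf_absorb1)
    then show False
      using \<open>w = p\<close> p_neq_q inf_q_neg_p by simp
  qed
  then show ?thesis
    using w_le_p by simp
qed

lemma q_less_neg_w: "q < neg w"
proof -
  have "q \<noteq> neg w"
  proof
    assume "q = neg w"
    then have "sup p (neg q) = p"
      using w_le_p by (simp add: sup_absorb1)
    then show False
      using \<open>q = neg w\<close> p_neq_q sup_p_neg_q by simp
  qed
  then show ?thesis
    using q_le_neg_w by simp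
qed

lemma strict_chains: "w < p" "p < q" "q < neg w" "w < neg q" "neg q < neg p" "neg p < neg w"
proof -
  show "w < p" "q < neg w"
    by (fact w_less_p q_less_neg_w)+
  then show "w < neg q" "neg p < neg w"
    by (simp_all add: less_neg_iff)
  show "p < q" "neg q < neg p"
    using p_le_q p_neq_q by (simp_all add: less_le)
qed

lemma crossing_neq:
  assumes "w < u" "u \<le> q" "w \<le> v" "v \<le> neg p"
  shows "u \<noteq> v"
proof
  assume "u = v"
  then have "u = w"
    using inf_crossing [of u v] assms by simp
  then show False
    using assms by simp
qed

lemma crossing_inf_sup:
  assumes "u \<in> {p, q}" "v \<in> {neg p, neg q}"
  shows "inf u v = w" "inf v u = w" "sup u v = neg w" "sup v u = neg w"
proof -
  have "w \<le> u" "u \<le> q" "w \<le> v" "v \<le> neg p"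
    and "p \<le> u" "u \<le> neg w" "neg q \<le> v" "v \<le> neg w"
    using assms strict_chains by (auto; order)+
  then show "inf u v = w" "inf v u = w" "sup u v = neg w" "sup v u = neg w"
    using inf_crossing sup_crossing by (simp_all add: inf_commute sup_commute)
qed

lemma crossing_distinct: "p \<noteq> neg p" "p \<noteq> neg q" "q \<noteq> neg p" "q \<noteq> neg q"
  using strict_chains by (intro crossing_neq; order)+

lemma has_sub_B6_if_w_bot:
  assumes "w = bot"
  shows "has_sub_B6 neg"
proof -
  define h where "h a = (case a of B6_0 \<Rightarrow> w | B6_x \<Rightarrow> p | B6_y \<Rightarrow> q
    | B6_y' \<Rightarrow> neg q | B6_x' \<Rightarrow> neg p | B6_1 \<Rightarrow> neg w)" for a
  have h_bounds: "h B6_0 = w" "h B6_1 = neg w"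
    by (simp_all add: h_def)
  have mono: "B6_le a b \<Longrightarrow> h a \<le> h b" for a b
    using strict_chains by (cases a; cases b; simp add: h_def; order)
  have incomparable: "inf (h a) (h b) = w \<and> sup (h a) (h b) = neg w"
    if "\<not> B6_le a b" "\<not> B6_le b a" for a b
    using that by (cases a; cases b; simp add: h_def crossing_inf_sup)
  have "h a = h b \<Longrightarrow> a = b" for a b
    using strict_chains crossing_distinct by (cases a; cases b; simp add: h_def; order)
  then show ?thesis
  proof (intro has_sub_B6I injI)
    show "h (B6_meet a b) = inf (h a) (h b)" for a b
      unfolding B6_meet_def by (rule map_if_le_eq_inf) (use mono incomparable h_bounds in auto)
    show "h (B6_join a b) = sup (h a) (h b)" for a b
      unfolding B6_join_def by (rule map_if_le_eq_sup) (use mono incomparable h_bounds in auto)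
    show "h (B6_neg a) = neg (h a)" for a
      by (cases a) (simp_all add: h_def)
  qed (use assms h_bounds in simp_all)
qed

lemma has_sub_B8_if_w_neq_bot:
  assumes "w \<noteq> bot"
  shows "has_sub_B8 neg"
proof -
  define h where "h a = (case a of B8_0 \<Rightarrow> bot | B8_z' \<Rightarrow> w | B8_x \<Rightarrow> p | B8_y \<Rightarrow> q
    | B8_y' \<Rightarrow> neg q | B8_x' \<Rightarrow> neg p | B8_z \<Rightarrow> neg w | B8_1 \<Rightarrow> top)" for a
  have h_z: "h B8_z' = w" "h B8_z = neg w"
    by (simp_all add: h_def)
  have outer_chains: "bot < w" "neg w < top"
    using assms by (simp_all add: bot_less flip: neg_bot)
  have mono: "B8_le a b \<Longrightarrow> h a \<le> h b" for a b
    using strict_chains outer_chains by (cases a; cases b; simp add: h_def; order)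
  have incomparable: "inf (h a) (h b) = w \<and> sup (h a) (h b) = neg w"
    if "\<not> B8_le a b" "\<not> B8_le b a" for a b
    using that by (cases a; cases b; simp add: h_def crossing_inf_sup)
  have "h a = h b \<Longrightarrow> a = b" for a b
    using strict_chains outer_chains crossing_distinct by (cases a; cases b; simp add: h_def; order)
  then show ?thesis
  proof (intro has_sub_B8I injI)
    show "h (B8_meet a b) = inf (h a) (h b)" for a b
      unfolding B8_meet_def by (rule map_if_le_eq_inf) (use mono incomparable h_z in auto)
    show "h (B8_join a b) = sup (h a) (h b)" for a b
      unfolding B8_join_def by (rule map_if_le_eq_sup) (use mono incomparable h_z in auto)
    show "h (B8_neg a) = neg (h a)" for a
      by (cases a) (simp_all add: h_def)
  qed (simp_all add: h_def)
qed

lemma has_sub_B6_or_B8: "has_sub_B6 neg \<or> has_sub_B8 neg"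
  using has_sub_B6_if_w_bot has_sub_B8_if_w_neq_bot by blast

end

lemma B_configuration_if_not_SP1:
  assumes "pseudo_kleene neg" "x \<le> y"
    and "inf (neg x) y = sup (inf x (neg x)) (inf y (neg y))"
    and "inf y (sup x (neg x)) \<noteq> sup x (inf y (neg y))"
  shows "B_configuration neg (inf (neg x) y) (sup x (inf y (neg y))) (inf y (sup x (neg x)))"
proof -
  interpret antitone_involution neg
    using assms(1) by (rule pseudo_kleene_antitone_involution)
  have kleene: "inf y (neg y) \<le> sup x (neg x)"
    using assms(1) by (rule pseudo_kleene_inf_neg_le_sup_neg)
  show ?thesis
  proof unfold_locales
    show "inf (neg x) y \<le> sup x (inf y (neg y))"
      unfolding assms(3) by (simp add: le_supI1)
    show "sup x (inf y (neg y)) \<le> inf y (sup x (neg x))"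
      using assms(2) kleene by (simp add: le_infI1)
    show "inf (neg x) y \<le> neg (inf y (sup x (neg x)))"
      unfolding assms(3) by (simp add: le_supI1 le_supI2 inf_commute)
    show "inf (inf y (sup x (neg x))) (neg (sup x (inf y (neg y)))) = inf (neg x) y"
      by (rule antisym) (auto intro: le_infI1 le_infI2 le_supI1 le_supI2 simp: inf_commute)
    show "sup (sup x (inf y (neg y))) (neg (inf y (sup x (neg x)))) = neg (inf (neg x) y)"
      by (rule antisym) (auto intro: le_supI1 le_supI2 le_infI1 le_infI2 simp: sup_commute)
    show "sup x (inf y (neg y)) \<noteq> inf y (sup x (neg x))"
      using assms(4) by (rule not_sym)
  qed
qed

theorem theorem3p2:
  fixes neg :: "'a::bounded_lattice \<Rightarrow> 'a"
  assumes "pseudo_kleene neg"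
  shows "SP1 neg \<longleftrightarrow> \<not> has_sub_B6 neg \<and> \<not> has_sub_B8 neg"
proof
  show "SP1 neg \<Longrightarrow> \<not> has_sub_B6 neg \<and> \<not> has_sub_B8 neg"
    using not_SP1_if_has_sub_B6 not_SP1_if_has_sub_B8 by blast
next
  assume no_sub: "\<not> has_sub_B6 neg \<and> \<not> has_sub_B8 neg"
  show "SP1 neg"
    unfolding SP1_def
  proof (intro allI impI; rule ccontr)
    fix x y
    assume "x \<le> y \<and> inf (neg x) y = sup (inf x (neg x)) (inf y (neg y))"
      and "inf y (sup x (neg x)) \<noteq> sup x (inf y (neg y))"
    then have "B_configuration neg (inf (neg x) y) (sup x (inf y (neg y))) (inf y (sup x (neg x)))"
      using assms by (intro B_configuration_if_not_SP1) auto
    then show False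
      using B_configuration.has_sub_B6_or_B8 no_sub by blast
  qed
qed

end
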